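(* Let $m=n(n+1)/2$ and let $T:\mathcal{S}^n\to\mathbb{R}^m$ be the natural linear isomorphism (recording the entries on and above the diagonal) with $T(\mathcal{N}^n_+)=\mathbb{R}^m_+$. Then $\mathrm{Sem}(\mathcal{N}^n_+)$ is the set of all maps on $\mathcal{S}^n$ of the form $T^{-1}(YX^{-1})T$, where $X$ and $Y$ are entrywise positive $m\times m$ real matrices with $X$ invertible.
   Context: $\mathcal{S}^n$ denotes the space of real symmetric $n\times n$ matrices and $\mathcal{N}^n_+$ the cone of entrywise nonnegative matrices in $\mathcal{S}^n$; $\mathbb{R}^m_+$ is the nonnegative orthant. For a proper cone $K$ in a space $V$ with interior $K^{\circ}$, $\mathrm{Sem}(K)$ is the set of linear maps $L:V\to V$ for which there exists $x\in K^{\circ}$ with $L(x)\in K^{\circ}$. A matrix is entrywise positive if all its entries are strictly positive. *)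

theory Defs
  imports "HOL-Analysis.Analysis"
begin

definition Sym :: "(real^'n^'n) set" where
  "Sym = {A. transpose A = A}"

definition Nplus :: "(real^'n^'n) set" where
  "Nplus = {A \<in> Sym. \<forall>i j. 0 \<le> A $ i $ j}"

definition int_in :: "'a::metric_space set \<Rightarrow> 'a set \<Rightarrow> 'a set" where
  "int_in V K = {x \<in> K. \<exists>e>0. ball x e \<inter> V \<subseteq> K}"

definition lin_map_on :: "'a::real_vector set \<Rightarrow> ('a \<Rightarrow> 'a) \<Rightarrow> bool" where
  "lin_map_on V L \<longleftrightarrow> (\<forall>x\<in>V. L x \<in> V) \<and>
     (\<forall>x\<in>V. \<forall>y\<in>V. L (x + y) = L x + L y) \<and> (\<forall>c. \<forall>x\<in>V. L (c *\<^sub>R x) = c *\<^sub>R L x)"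

definition Sem :: "'a::real_normed_vector set \<Rightarrow> 'a set \<Rightarrow> ('a \<Rightarrow> 'a) set" where
  "Sem V K = {L. lin_map_on V L \<and> (\<exists>x \<in> int_in V K. L x \<in> int_in V K)}"

definition entrywise_pos :: "real^'m^'k \<Rightarrow> bool" where
  "entrywise_pos X \<longleftrightarrow> (\<forall>i j. 0 < X $ i $ j)"

text \<open>An enumeration e of the index set {(i,j). i <= j} of entries on and above the diagonal
  by the index type 'm (so CARD('m) = n(n+1)/2).\<close>
definition upper_enum :: "('m::finite \<Rightarrow> 'n::{finite,linorder} \<times> 'n) \<Rightarrow> bool" where
  "upper_enum e \<longleftrightarrow> bij_betw e UNIV {(i,j). i \<le> j}"

definition Tmap :: "('m::finite \<Rightarrow> ('n::{finite,linorder}) \<times> ('n::{finite,linorder})) \<Rightarrow> real^('n::{finite,linorder})^('n::{finite,linorder}) \<Rightarrow> real^'m" where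
  "Tmap e A = (\<chi> k. A $ fst (e k) $ snd (e k))"

definition Tinv :: "('m::finite \<Rightarrow> ('n::{finite,linorder}) \<times> ('n::{finite,linorder})) \<Rightarrow> real^'m \<Rightarrow> real^('n::{finite,linorder})^('n::{finite,linorder})" where
  "Tinv e v = (\<chi> i j. v $ (inv_into UNIV e (min i j, max i j)))"

end

theory Submission
  imports Defs
begin

(*
  Entrywise, T identifies Sym with R^m and the relative interior of Nplus (the symmetric
  matrices with positive entries) with the open orthant. Hence L is in Sem(Nplus) iff the
  matrix M of T L T^-1 maps some positive vector u to a positive vector. Such an M equals
  Y X^-1 for X = u 1^T + eps I, which has trivial kernel, and Y = M X = (M u) 1^T + eps M;
  both are entrywise positive once eps > 0 is small. Conversely, if M = Y X^-1 with X, Y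
  entrywise positive, then u = X 1 is positive and so is M u = Y 1.
*)

lemma matrix_inv_right:
  assumes "invertible (A::'a::semiring_1^'n^'m)"
  shows "A ** matrix_inv A = mat 1"
  using assms someI_ex[of "\<lambda>A'. A ** A' = mat 1 \<and> A' ** A = mat 1"]
  unfolding invertible_def matrix_inv_def by blast

lemma matrix_inv_left:
  assumes "invertible (A::'a::semiring_1^'n^'m)"
  shows "matrix_inv A ** A = mat 1"
  using assms someI_ex[of "\<lambda>A'. A ** A' = mat 1 \<and> A' ** A = mat 1"]
  unfolding invertible_def matrix_inv_def by blast

lemma ex_small_perturbation_pos:
  fixes a b :: "'k::finite \<Rightarrow> real"
  assumes "\<And>k. 0 < a k"
  shows "\<exists>\<epsilon>>0. \<forall>k. 0 < a k + \<epsilon> * b k"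
proof -
  have "((\<lambda>\<epsilon>. a k + \<epsilon> * b k) \<longlongrightarrow> a k) (at_right 0)" for k
    by (auto intro!: tendsto_eq_intros)
  then have "\<forall>\<^sub>F \<epsilon> in at_right 0. 0 < a k + \<epsilon> * b k" for k
    using assms order_tendstoD(1) by blast
  then have "\<forall>\<^sub>F \<epsilon> in at_right 0. 0 < \<epsilon> \<and> (\<forall>k. 0 < a k + \<epsilon> * b k)"
    by (intro eventually_conj eventually_all_finite) (auto simp: eventually_at_right_less)
  then show ?thesis
    using eventually_happens'[OF trivial_limit_at_right_real] by blast
qed

definition rank_one_plus_diag :: "'a::semiring_1^'m \<Rightarrow> 'a \<Rightarrow> 'a^'m^'m" where
  "rank_one_plus_diag u c = (\<chi> i j. u$i + (if i = j then c else 0))"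

lemma invertible_rank_one_plus_diag:
  fixes u :: "'a::field^'m"
  assumes "c \<noteq> 0" and "c + sum (($) u) UNIV \<noteq> 0"
  shows "invertible (rank_one_plus_diag u c)"
  unfolding invertible_left_inverse matrix_left_invertible_ker
proof (intro allI impI)
  fix w assume w0: "rank_one_plus_diag u c *v w = 0"
  define s where "s = sum (($) w) UNIV"
  have "u$i * s + c * w$i = 0" for i
  proof -
    have "(rank_one_plus_diag u c *v w)$i = (\<Sum>k\<in>UNIV. u$i * w$k + (if i = k then c * w$k else 0))"
      unfolding rank_one_plus_diag_def matrix_vector_mult_def by (auto simp: algebra_simps intro!: sum.cong)
    also have "\<dots> = u$i * s + c * w$i"
      by (simp add: sum.distrib s_def sum_distrib_left)
    finally show ?thesis using w0 by simp
  qed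
  then have wi: "w$i = - u$i * s / c" for i
    using assms(1) by (simp add: field_simps add_eq_0_iff)
  have "s = (\<Sum>k\<in>UNIV. w$k)"
    unfolding s_def ..
  also have "\<dots> = (\<Sum>k\<in>UNIV. - u$k * s / c)"
    by (simp only: wi)
  also have "\<dots> = - s / c * sum (($) u) UNIV"
    by (simp add: sum_distrib_left sum_divide_distrib algebra_simps)
  finally have "s * (c + sum (($) u) UNIV) = 0"
    using assms(1) by (simp add: field_simps)
  then have "s = 0" using assms(2) by simp
  then show "w = 0" using wi by (simp add: vec_eq_iff)
qed

lemma matrix_mul_rank_one_plus_diag:
  fixes M :: "'a::comm_semiring_1^'m^'k"
  shows "M ** rank_one_plus_diag u c = (\<chi> i j. (M *v u)$i + c * M$i$j)"
proof -
  have "(M ** rank_one_plus_diag u c)$i$j = (\<Sum>k\<in>UNIV. M$i$k * u$k + (if k = j then c * M$i$k else 0))" for i j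
    unfolding rank_one_plus_diag_def matrix_matrix_mult_def by (auto simp: algebra_simps intro!: sum.cong)
  then show ?thesis
    by (simp add: vec_eq_iff matrix_vector_mult_def sum.distrib mult.commute)
qed

lemma positive_image_iff_positive_factorization:
  fixes M :: "real^'m^'m"
  shows "(\<exists>u. (\<forall>i. 0 < u$i) \<and> (\<forall>i. 0 < (M *v u)$i)) \<longleftrightarrow>
    (\<exists>X Y :: real^'m^'m. entrywise_pos X \<and> entrywise_pos Y \<and> invertible X \<and> Y ** matrix_inv X = M)"
    (is "?positive_image \<longleftrightarrow> ?factorization")
proof
  assume ?positive_image
  then obtain u where u: "\<And>i. 0 < u$i" and Mu: "\<And>i. 0 < (M *v u)$i" by blast
  obtain \<epsilon> :: real where "\<epsilon> > 0" and \<epsilon>: "\<forall>i j. 0 < (M *v u)$i + \<epsilon> * M$i$j"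
    using ex_small_perturbation_pos[of "\<lambda>(i, j). (M *v u)$i" "\<lambda>(i, j). M$i$j"] Mu
    by auto
  define X where "X = rank_one_plus_diag u \<epsilon>"
  have "entrywise_pos X"
    using u \<open>\<epsilon> > 0\<close> by (simp add: X_def rank_one_plus_diag_def entrywise_pos_def add_pos_nonneg)
  moreover have "entrywise_pos (M ** X)"
    using \<epsilon> by (simp add: X_def matrix_mul_rank_one_plus_diag entrywise_pos_def)
  moreover have "invertible X"
  proof -
    have "0 \<le> sum (($) u) UNIV"
      using u by (simp add: sum_nonneg less_imp_le)
    then show ?thesis
      unfolding X_def using \<open>\<epsilon> > 0\<close> by (intro invertible_rank_one_plus_diag) auto
  qed
  moreover have "(M ** X) ** matrix_inv X = M"
    using matrix_inv_right[OF \<open>invertible X\<close>] by (simp add: matrix_mul_assoc[symmetric])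
  ultimately show ?factorization
    by blast
next
  assume ?factorization
  then obtain X Y :: "real^'m^'m" where X: "entrywise_pos X" and Y: "entrywise_pos Y" and "invertible X"
    and M: "Y ** matrix_inv X = M" by blast
  define one :: "real^'m" where "one = (\<chi> i. 1)"
  have pos: "0 < (Z *v one)$i" if "entrywise_pos Z" for Z :: "real^'m^'m" and i
    using that by (simp add: entrywise_pos_def matrix_vector_mult_def one_def sum_pos)
  have "M *v (X *v one) = Y *v one"
    using matrix_inv_left[OF \<open>invertible X\<close>]
    by (simp add: M[symmetric] matrix_vector_mul_assoc matrix_mul_assoc[symmetric])
  then show ?positive_image
    using pos[OF X] pos[OF Y] by metis
qed

lemma mem_Sym_iff: "A \<in> Sym \<longleftrightarrow> (\<forall>i j. A$i$j = A$j$i)"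
  unfolding Sym_def transpose_def by (auto simp: vec_eq_iff)

lemma abs_matrix_entry_le_norm: "\<bar>A$i$j\<bar> \<le> norm (A :: real^'n^'m)"
  by (meson component_le_norm_cart Finite_Cartesian_Product.norm_nth_le order_trans)

lemma int_in_Sym_Nplus: "int_in Sym Nplus = {A \<in> Sym. \<forall>i j. 0 < A$i$j}"
proof (intro set_eqI iffI)
  fix A :: "real^'n^'n"
  assume "A \<in> int_in Sym Nplus"
  then obtain r where "A \<in> Sym" "r > 0" and ball: "ball A r \<inter> Sym \<subseteq> Nplus"
    unfolding int_in_def Nplus_def by auto
  define J :: "real^'n^'n" where "J = (\<chi> i j. 1)"
  have "((\<lambda>t. A - t *\<^sub>R J) \<longlongrightarrow> A) (at_right 0)"
    by (auto intro!: tendsto_eq_intros)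
  from tendstoD[OF this \<open>r > 0\<close>]
  have "\<forall>\<^sub>F t in at_right 0. 0 < t \<and> A - t *\<^sub>R J \<in> ball A r"
    by (intro eventually_conj eventually_at_right_less) (simp add: dist_commute)
  then obtain t where "0 < t" and "A - t *\<^sub>R J \<in> ball A r"
    using eventually_happens'[OF trivial_limit_at_right_real] by blast
  moreover have "A - t *\<^sub>R J \<in> Sym"
    using \<open>A \<in> Sym\<close> by (simp add: mem_Sym_iff J_def)
  ultimately have "A - t *\<^sub>R J \<in> Nplus"
    using ball by blast
  then have "t \<le> A$i$j" for i j
    by (simp add: Nplus_def J_def)
  with \<open>A \<in> Sym\<close> \<open>0 < t\<close> show "A \<in> {A \<in> Sym. \<forall>i j. 0 < A$i$j}"
    by (auto intro: less_le_trans)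
next
  fix A :: "real^'n^'n"
  assume A: "A \<in> {A \<in> Sym. \<forall>i j. 0 < A$i$j}"
  define d where "d = Min (range (\<lambda>(i, j). A$i$j))"
  have "0 < d"
    using A by (simp add: d_def)
  have d: "d \<le> A$i$j" for i j
    unfolding d_def by (rule Min_le) (auto intro: image_eqI[where x="(i, j)"])
  have "ball A d \<inter> Sym \<subseteq> Nplus"
  proof
    fix B assume B: "B \<in> ball A d \<inter> Sym"
    have "\<bar>A$i$j - B$i$j\<bar> < d" for i j
      using abs_matrix_entry_le_norm[of "A - B" i j] B by (simp add: dist_norm)
    then have "0 \<le> B$i$j" for i j
      using d[of i j] by (smt (verit))
    then show "B \<in> Nplus"
      using B by (simp add: Nplus_def)
  qed
  then show "A \<in> int_in Sym Nplus"
    using A \<open>0 < d\<close> by (auto simp: int_in_def Nplus_def less_imp_le)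
qed

lemma Tmap_Tinv:
  assumes "upper_enum e"
  shows "Tmap e (Tinv e v) = v"
proof -
  have e: "bij_betw e UNIV {(i, j). i \<le> j}"
    using assms unfolding upper_enum_def .
  have "(min (fst (e k)) (snd (e k)), max (fst (e k)) (snd (e k))) = e k" for k
    using bij_betw_apply[OF e, of k] by (auto simp: min_def max_def)
  then have "inv_into UNIV e (min (fst (e k)) (snd (e k)), max (fst (e k)) (snd (e k))) = k" for k
    using bij_betw_inv_into_left[OF e] by simp
  then show ?thesis
    unfolding Tmap_def Tinv_def by (simp add: vec_eq_iff)
qed

lemma Tinv_Tmap:
  assumes "upper_enum e" and "A \<in> Sym"
  shows "Tinv e (Tmap e A) = A"
proof -
  have "e (inv_into UNIV e (min i j, max i j)) = (min i j, max i j)" for i j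
    using assms(1) by (auto intro!: bij_betw_inv_into_right simp: upper_enum_def min_def max_def)
  moreover have "A $ min i j $ max i j = A$i$j" for i j
    using assms(2) by (cases "i \<le> j") (auto simp: mem_Sym_iff min_def max_def)
  ultimately show ?thesis
    unfolding Tmap_def Tinv_def by (simp add: vec_eq_iff)
qed

lemma Tinv_in_Sym: "Tinv e v \<in> Sym"
  unfolding mem_Sym_iff Tinv_def by (simp add: min.commute max.commute)

lemma linear_Tmap: "linear (Tmap e)"
  by (rule linearI) (simp_all add: Tmap_def vec_eq_iff)

lemma linear_Tinv: "linear (Tinv e)"
  by (rule linearI) (simp_all add: Tinv_def vec_eq_iff)

lemma Tinv_in_int_in_Nplus_iff:
  assumes "upper_enum e"
  shows "Tinv e v \<in> int_in Sym Nplus \<longleftrightarrow> (\<forall>k. 0 < v$k)"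
proof
  assume "Tinv e v \<in> int_in Sym Nplus"
  then have "0 < Tmap e (Tinv e v) $ k" for k
    by (simp add: int_in_Sym_Nplus Tmap_def)
  then show "\<forall>k. 0 < v$k"
    by (simp add: Tmap_Tinv[OF assms])
next
  assume "\<forall>k. 0 < v$k"
  then show "Tinv e v \<in> int_in Sym Nplus"
    by (simp add: int_in_Sym_Nplus Tinv_in_Sym) (simp add: Tinv_def)
qed

definition Tconj :: "('m::finite \<Rightarrow> 'n::{finite,linorder} \<times> 'n::{finite,linorder}) \<Rightarrow>
    (real^'n::{finite,linorder}^'n::{finite,linorder} \<Rightarrow> real^'n::{finite,linorder}^'n::{finite,linorder}) \<Rightarrow>
    real^'m \<Rightarrow> real^'m" where
  "Tconj e L = Tmap e \<circ> L \<circ> Tinv e"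

lemma matrix_Tconj_mult:
  assumes "lin_map_on Sym L"
  shows "matrix (Tconj e L) *v v = Tmap e (L (Tinv e v))"
proof -
  have "linear (Tconj e L)"
    using assms linear_Tmap[of e] linear_Tinv[of e] Tinv_in_Sym[of e]
    by (intro linearI) (simp_all add: Tconj_def lin_map_on_def linear_add linear_scale)
  then show ?thesis
    by (simp add: matrix_works linear_matrix_vector_mul_eq Tconj_def)
qed

lemma lin_map_on_Sym_represented_iff:
  assumes "upper_enum e" and "lin_map_on Sym L"
  shows "(\<forall>A\<in>Sym. L A = Tinv e (N *v Tmap e A)) \<longleftrightarrow> N = matrix (Tconj e L)"
proof
  assume rep: "\<forall>A\<in>Sym. L A = Tinv e (N *v Tmap e A)"
  have "N *v v = matrix (Tconj e L) *v v" for v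
    using rep[rule_format, OF Tinv_in_Sym, of e v]
    by (simp add: matrix_Tconj_mult[OF assms(2)] Tmap_Tinv[OF assms(1)])
  then show "N = matrix (Tconj e L)"
    by (simp add: matrix_eq)
next
  assume N: "N = matrix (Tconj e L)"
  have "L A = Tinv e (Tmap e (L (Tinv e (Tmap e A))))" if "A \<in> Sym" for A
    using that assms by (simp add: Tinv_Tmap lin_map_on_def)
  then show "\<forall>A\<in>Sym. L A = Tinv e (N *v Tmap e A)"
    by (simp add: N matrix_Tconj_mult[OF assms(2)])
qed

lemma Sem_Sym_Nplus_iff:
  assumes "upper_enum e" and "lin_map_on Sym L"
  shows "L \<in> Sem Sym Nplus \<longleftrightarrow>
    (\<exists>u. (\<forall>k. 0 < u$k) \<and> (\<forall>k. 0 < (matrix (Tconj e L) *v u)$k))"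
proof -
  have L: "L (Tinv e u) = Tinv e (matrix (Tconj e L) *v u)" for u
  proof -
    have "L (Tinv e u) \<in> Sym"
      using assms(2) Tinv_in_Sym[of e u] unfolding lin_map_on_def by blast
    then show ?thesis
      by (simp add: matrix_Tconj_mult[OF assms(2)] Tinv_Tmap[OF assms(1)])
  qed
  have "L \<in> Sem Sym Nplus \<longleftrightarrow> (\<exists>x\<in>int_in Sym Nplus. L x \<in> int_in Sym Nplus)"
    using assms(2) by (simp add: Sem_def)
  also have "\<dots> \<longleftrightarrow> (\<exists>u. Tinv e u \<in> int_in Sym Nplus \<and> L (Tinv e u) \<in> int_in Sym Nplus)"
  proof
    assume "\<exists>x\<in>int_in Sym Nplus. L x \<in> int_in Sym Nplus"
    then obtain x where x: "x \<in> int_in Sym Nplus" "L x \<in> int_in Sym Nplus" by blast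
    then have "Tinv e (Tmap e x) = x"
      by (simp add: int_in_Sym_Nplus Tinv_Tmap[OF assms(1)])
    with x show "\<exists>u. Tinv e u \<in> int_in Sym Nplus \<and> L (Tinv e u) \<in> int_in Sym Nplus"
      by (intro exI[of _ "Tmap e x"]) simp
  qed blast
  finally show ?thesis
    by (simp add: L Tinv_in_int_in_Nplus_iff[OF assms(1)])
qed

theorem mainTheorem8:
  fixes e :: "'m::finite \<Rightarrow> 'n::{finite,linorder} \<times> 'n"
  assumes "upper_enum e"
  shows "Sem Sym Nplus =
    {L. lin_map_on Sym L \<and>
        (\<exists>X Y :: real^'m^'m. entrywise_pos X \<and> entrywise_pos Y \<and> invertible X \<and>
           (\<forall>A\<in>Sym. L A = Tinv e ((Y ** matrix_inv X) *v Tmap e A)))}"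
proof -
  have "L \<in> Sem Sym Nplus \<longleftrightarrow> lin_map_on Sym L \<and>
        (\<exists>X Y :: real^'m^'m. entrywise_pos X \<and> entrywise_pos Y \<and> invertible X \<and>
           (\<forall>A\<in>Sym. L A = Tinv e ((Y ** matrix_inv X) *v Tmap e A)))" for L
  proof (cases "lin_map_on Sym L")
    case True
    have "L \<in> Sem Sym Nplus \<longleftrightarrow>
        (\<exists>u. (\<forall>k. 0 < u$k) \<and> (\<forall>k. 0 < (matrix (Tconj e L) *v u)$k))"
      by (rule Sem_Sym_Nplus_iff[OF assms True])
    also have "\<dots> \<longleftrightarrow> (\<exists>X Y :: real^'m^'m. entrywise_pos X \<and> entrywise_pos Y \<and> invertible X \<and>
        Y ** matrix_inv X = matrix (Tconj e L))"
      by (rule positive_image_iff_positive_factorization)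
    also have "\<dots> \<longleftrightarrow> (\<exists>X Y :: real^'m^'m. entrywise_pos X \<and> entrywise_pos Y \<and> invertible X \<and>
        (\<forall>A\<in>Sym. L A = Tinv e ((Y ** matrix_inv X) *v Tmap e A)))"
      by (simp add: lin_map_on_Sym_represented_iff[OF assms True])
    finally show ?thesis
      using True by simp
  qed (simp add: Sem_def)
  then show ?thesis
    by blast
qed

end
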